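(* Let $n\ge2$, let $u=(u_{ij})$ be Haar-distributed on $O_n$, and let $x=u_{ij}$, $y=u_{kl}$ with $i\ne k$ and $j\ne l$. For $\alpha,\beta\in\mathbb N$ both even, $$\int_{O_n}x^\alpha y^\beta\,du=\frac{(n-2)!\;\alpha!!\;\beta!!\;(\alpha+\beta+n-2)!!}{(\alpha+n-2)!!\,(\beta+n-2)!!\,(\alpha+\beta+n-1)!!},$$ and if $\alpha$ or $\beta$ is odd the integral vanishes.
   Context: Double factorial convention (non-standard): for an integer $m\ge0$, $m!!=(m-1)(m-3)\cdots$, the product of the positive integers $\le m-1$ of the parity of $m-1$ (empty product $=1$); $(n-2)!$ is the ordinary factorial. $du$ is the Haar probability measure on $O_n$. *)

theory Defs
  imports "HOL-Probability.Probability"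
begin

text \<open>Paper's (shifted) double factorial: m!! = (m-1)(m-3)..., the product of the
positive integers \<le> m-1 having the parity of m-1 (empty product = 1).\<close>
definition dfact :: "nat \<Rightarrow> real" where
  "dfact m = (\<Prod>k\<in>{k. 0 < k \<and> k + 1 \<le> m \<and> odd (k + m)}. real k)"

definition haar_orthogonal :: "(real^'n^'n) measure \<Rightarrow> bool" where
  "haar_orthogonal \<mu> \<longleftrightarrow>
     prob_space \<mu> \<and> sets \<mu> = sets borel \<and>
     (AE M in \<mu>. orthogonal_matrix M) \<and>
     (\<forall>U. orthogonal_matrix U \<longrightarrow> distr \<mu> borel (\<lambda>M. U ** M) = \<mu>)"

end

theory Submission
  imports Defs
begin

text \<open>
  Write \<open>x = M$i$j\<close>, \<open>z = M$i$l\<close> (same row) and \<open>y = M$k$l\<close>, where \<open>i \<noteq> k\<close> and \<open>j \<noteq> l\<close>.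
  Left invariance of the Haar measure under the rotations \<open>givens p q t\<close> of the \<open>(p,q)\<close>-plane
  implies that the derivative at \<open>t = 0\<close> of \<open>f (givens p q t ** M)\<close> has integral zero, for
  every continuous \<open>f\<close>; this uses dominated convergence and compactness of the orthogonal
  group.  Applied to suitable monomials and summed over the second rotation index, the
  orthonormality of the columns turns this into two linear recurrences for the moments
  \<open>E[x^a z^e y^b]\<close>: one raises the exponent of \<open>x\<close> within a single row, the other raises the
  exponent of \<open>y\<close> and also involves \<open>z\<close>.  The explicit expression \<open>moment_formula\<close> satisfies
  the same recurrences and equals 1 at the origin, so induction identifies it with the even
  moments; the theorem is the case \<open>e = 0\<close>.  Odd moments vanish because reflecting one row
  preserves the Haar measure and changes the sign of the integrand.
\<close>


subsection \<open>Double factorials and the closed form of the moments\<close>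

lemma dfact_Suc_Suc: "dfact (m + 2) = real (m + 1) * dfact m"
proof -
  have "{k. 0 < k \<and> k + 1 \<le> m + 2 \<and> odd (k + (m + 2))}
        = insert (m + 1) {k. 0 < k \<and> k + 1 \<le> m \<and> odd (k + m)}"
    by auto presburger+
  moreover have "finite {k. 0 < k \<and> k + 1 \<le> m \<and> odd (k + m)}"
    by (rule finite_subset[of _ "{..m}"]) auto
  ultimately show ?thesis unfolding dfact_def by simp
qed

lemma dfact_shift: "x = y + 2 \<Longrightarrow> z = y + 1 \<Longrightarrow> dfact x = real z * dfact y"
  using dfact_Suc_Suc[of y] by simp

lemma dfact_pos: "dfact m > 0"
  unfolding dfact_def by (rule prod_pos) auto

lemma dfact_nonzero [simp]: "dfact m \<noteq> 0"
  using dfact_pos[of m] by simp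

lemma dfact_0: "dfact 0 = 1" and dfact_1: "dfact 1 = 1"
proof -
  have "{k::nat. 0 < k \<and> k + 1 \<le> 0 \<and> odd (k + 0)} = {}"
    and "{k::nat. 0 < k \<and> k + 1 \<le> 1 \<and> odd (k + 1)} = {}" by auto
  then show "dfact 0 = 1" "dfact 1 = 1" unfolding dfact_def by (simp_all only: prod.empty)
qed

lemma dfact_consecutive: "dfact (m + 1) * dfact m = fact m"
proof (induction m)
  case 0
  show ?case using dfact_0 dfact_1 by simp
next
  case (Suc m)
  then show ?case using dfact_Suc_Suc[of m] by (simp add: algebra_simps)
qed

text \<open>
  The closed form of \<open>E[x^a z^e y^b]\<close> for even exponents in dimension \<open>n = m + 2\<close>.  The
  paper's formula is the case \<open>e = 0\<close>; the extra exponent \<open>e\<close> is needed because the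
  recurrence for \<open>b\<close> couples \<open>y\<close> with \<open>z\<close>.
\<close>
definition moment_formula :: "nat \<Rightarrow> nat \<Rightarrow> nat \<Rightarrow> nat \<Rightarrow> real" where
  "moment_formula m a e b = fact m * dfact a * dfact e * dfact b * dfact (a + b + m)
      / (dfact (a + e + b + m + 1) * dfact (a + m) * dfact (b + m))"

lemma moment_formula_0: "moment_formula m 0 0 0 = 1"
  using dfact_consecutive[of m] by (simp add: moment_formula_def dfact_0)

lemma moment_formula_step_a:
  "real (a + e + m + 2) * moment_formula m (a + 2) e 0 = real (a + 1) * moment_formula m a e 0"
proof -
  have shifts: "dfact (a + 2) = real (a + 1) * dfact a"
    "dfact (a + 2 + 0 + m) = real (a + m + 1) * dfact (a + m)"
    "dfact (a + 2 + e + 0 + m + 1) = real (a + e + m + 2) * dfact (a + e + 0 + m + 1)"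
    "dfact (a + 2 + m) = real (a + m + 1) * dfact (a + m)"
    by (rule dfact_shift; simp)+
  show ?thesis unfolding moment_formula_def shifts by (simp add: divide_simps ac_simps del: of_nat_add)
qed

lemma moment_formula_step_e:
  "real (a + e + b + m + 2) * moment_formula m a (e + 2) b = real (e + 1) * moment_formula m a e b"
proof -
  have shifts: "dfact (e + 2) = real (e + 1) * dfact e"
    "dfact (a + (e + 2) + b + m + 1) = real (a + e + b + m + 2) * dfact (a + e + b + m + 1)"
    by (rule dfact_shift; simp)+
  show ?thesis unfolding moment_formula_def shifts by (simp add: divide_simps ac_simps del: of_nat_add)
qed

lemma moment_formula_step_b:
  "real (b + m + 1) * moment_formula m a e (b + 2) =
     real (b + 1) * (moment_formula m a e b - moment_formula m a (e + 2) b)"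
proof -
  have shifts: "dfact (b + 2) = real (b + 1) * dfact b"
    "dfact (a + (b + 2) + m) = real (a + b + m + 1) * dfact (a + b + m)"
    "dfact (a + e + (b + 2) + m + 1) = real (a + e + b + m + 2) * dfact (a + e + b + m + 1)"
    "dfact (b + 2 + m) = real (b + m + 1) * dfact (b + m)"
    by (rule dfact_shift; simp)+
  have e_step: "moment_formula m a (e + 2) b
      = real (e + 1) / real (a + e + b + m + 2) * moment_formula m a e b"
    using moment_formula_step_e[of a e b m] by (simp add: field_simps del: of_nat_add)
  show ?thesis unfolding e_step unfolding moment_formula_def shifts
    by (simp add: divide_simps ac_simps del: of_nat_add) (simp add: algebra_simps)
qed


subsection \<open>The orthogonal group\<close>

lemma orthogonal_matrix_column_inner:
  assumes "orthogonal_matrix (M::real^'n^'n)"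
  shows "(\<Sum>r\<in>UNIV. M$r$p * M$r$q) = (if p = q then 1 else 0)"
proof -
  have "(transpose M ** M) $ p $ q = (mat 1 :: real^'n^'n) $ p $ q"
    using assms by (simp add: orthogonal_matrix)
  then show ?thesis by (simp add: matrix_matrix_mult_def transpose_def mat_def)
qed

text \<open>The orthogonal group is closed and bounded (its rows are unit vectors), hence compact.\<close>
lemma compact_orthogonal_matrices: "compact {M :: real^'n^'n. orthogonal_matrix M}"
  unfolding compact_eq_bounded_closed
proof
  have "norm M \<le> real CARD('n)" if "orthogonal_matrix M" for M :: "real^'n^'n"
  proof -
    have rows: "norm (M $ r) = 1" for r
      using that unfolding orthogonal_matrix_orthonormal_rows row_def by (simp add: vec_lambda_eta)
    have "norm M \<le> (\<Sum>r\<in>UNIV. norm (M $ r))"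
      unfolding norm_vec_def by (rule L2_set_le_sum) simp
    then show ?thesis by (simp add: rows)
  qed
  then show "bounded {M :: real^'n^'n. orthogonal_matrix M}"
    by (auto simp: bounded_iff)
  have "continuous_on UNIV (\<lambda>M::real^'n^'n. transpose M ** M)"
    unfolding matrix_matrix_mult_def transpose_def by (intro continuous_intros)
  then have "closed ((\<lambda>M::real^'n^'n. transpose M ** M) -` {mat 1})"
    using closed_vimage by blast
  then show "closed {M :: real^'n^'n. orthogonal_matrix M}"
    by (simp add: orthogonal_matrix vimage_def)
qed

lemma continuous_bounded_on_orthogonal:
  fixes h :: "real^'n^'n \<Rightarrow> real"
  assumes "continuous_on UNIV h"
  obtains C where "\<And>M. orthogonal_matrix M \<Longrightarrow> \<bar>h M\<bar> \<le> C"
proof -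
  have "compact (h ` {M. orthogonal_matrix M})"
    by (rule compact_continuous_image[OF continuous_on_subset[OF assms] compact_orthogonal_matrices])
      simp
  then obtain C where "\<forall>y \<in> h ` {M. orthogonal_matrix M}. norm y \<le> C"
    using compact_imp_bounded bounded_iff by metis
  then show ?thesis using that by auto
qed

lemma continuous_matrix_mult_left: "continuous_on UNIV (\<lambda>M::real^'n^'n. U ** M)"
  unfolding matrix_matrix_mult_def by (intro continuous_intros)

definition givens :: "'n \<Rightarrow> 'n \<Rightarrow> real \<Rightarrow> real^'n^'n" where
  "givens p q t = (\<chi> a b.
     if a = p then (if b = p then cos t else 0) + (if b = q then sin t else 0)
     else if a = q then (if b = p then - sin t else 0) + (if b = q then cos t else 0)
     else (if b = a then 1 else 0))"

lemma givens_mult: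
  assumes "p \<noteq> q"
  shows "(givens p q t ** M) $ a $ b =
    (if a = p then cos t * M$p$b + sin t * M$q$b
     else if a = q then - sin t * M$p$b + cos t * M$q$b else M$a$b)"
  using assms
  by (auto simp: givens_def matrix_matrix_mult_def distrib_right sum.distrib
      if_distrib[of "\<lambda>x. x * _"] cong: if_cong)

lemma givens_zero: "givens p q 0 = mat 1"
  by (auto simp: givens_def mat_def vec_eq_iff)

lemma givens_add:
  assumes "p \<noteq> q"
  shows "givens p q (s + t) = givens p q t ** givens p q s"
  using assms by (auto simp: vec_eq_iff givens_mult) (auto simp: givens_def cos_add sin_add algebra_simps)

lemma givens_orthogonal:
  assumes "p \<noteq> q"
  shows "orthogonal_matrix (givens p q t)"
proof -
  have "transpose (givens p q t) = givens p q (- t)"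
    using assms by (auto simp: givens_def transpose_def vec_eq_iff)
  moreover have "givens p q (- t) ** givens p q t = mat 1"
    using givens_add[OF assms, of t "- t"] by (simp add: givens_zero)
  ultimately show ?thesis unfolding orthogonal_matrix by simp
qed

text \<open>Stated with a free derivative \<open>D\<close> so that it can serve as an introduction rule.\<close>
lemma givens_entry_deriv:
  assumes "p \<noteq> q" and "D = (if a = p then M$q$b else if a = q then - M$p$b else 0)"
  shows "((\<lambda>t. (givens p q t ** M) $ a $ b) has_real_derivative D) (at 0)"
  unfolding givens_mult[OF assms(1)] assms(2)
  by (auto intro!: derivative_eq_intros)

text \<open>By the group law, a derivative along the rotation flow at \<open>0\<close> gives one at every time \<open>s\<close>.\<close>
lemma givens_flow_deriv:
  fixes f g :: "real^'n^'n \<Rightarrow> real"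
  assumes pq: "p \<noteq> q"
    and der0: "\<And>M. ((\<lambda>t. f (givens p q t ** M)) has_real_derivative g M) (at 0)"
  shows "((\<lambda>t. f (givens p q t ** M)) has_real_derivative g (givens p q s ** M)) (at s)"
proof -
  have "givens p q (h + s) ** M = givens p q h ** (givens p q s ** M)" for h
    using givens_add[OF pq, of s h] by (simp add: add.commute matrix_mul_assoc)
  then have "((\<lambda>h. f (givens p q (h + s) ** M)) has_real_derivative g (givens p q s ** M)) (at 0)"
    using der0[of "givens p q s ** M"] by simp
  then show ?thesis using DERIV_shift[of _ _ 0 s] by simp
qed


subsection \<open>Integration against the Haar measure\<close>

lemma haar_orthogonalD:
  assumes "haar_orthogonal \<mu>"
  shows "prob_space \<mu>" "sets \<mu> = sets borel" "AE M in \<mu>. orthogonal_matrix M"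
    and "orthogonal_matrix U \<Longrightarrow> distr \<mu> borel (\<lambda>M. U ** M) = \<mu>"
  using assms unfolding haar_orthogonal_def by auto

lemma haar_measurable_continuous:
  fixes h :: "real^'n^'n \<Rightarrow> real"
  assumes "haar_orthogonal \<mu>" and "continuous_on UNIV h"
  shows "h \<in> borel_measurable \<mu>"
  using borel_measurable_continuous_onI[OF assms(2)]
    measurable_cong_sets[OF haar_orthogonalD(2)[OF assms(1)] refl] by auto

text \<open>Every continuous function is Haar integrable, being bounded on the support.\<close>
lemma haar_integrable_continuous:
  fixes h :: "real^'n^'n \<Rightarrow> real"
  assumes H: "haar_orthogonal \<mu>" and c: "continuous_on UNIV h"
  shows "integrable \<mu> h"
proof -
  interpret prob_space \<mu> by (rule haar_orthogonalD(1)[OF H])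
  obtain C where C: "\<And>M. orthogonal_matrix M \<Longrightarrow> \<bar>h M\<bar> \<le> C"
    using continuous_bounded_on_orthogonal[OF c] by blast
  show ?thesis
  proof (rule integrable_const_bound[where B=C])
    show "AE M in \<mu>. norm (h M) \<le> C"
      using haar_orthogonalD(3)[OF H] by eventually_elim (simp add: C)
  qed (rule haar_measurable_continuous[OF H c])
qed

lemma haar_integral_cong_orthogonal:
  fixes h1 h2 :: "real^'n^'n \<Rightarrow> real"
  assumes H: "haar_orthogonal \<mu>" and "continuous_on UNIV h1" "continuous_on UNIV h2"
    and "\<And>M. orthogonal_matrix M \<Longrightarrow> h1 M = h2 M"
  shows "(\<integral>M. h1 M \<partial>\<mu>) = (\<integral>M. h2 M \<partial>\<mu>)"
  using assms haar_orthogonalD(3)[OF H]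
  by (intro integral_cong_AE haar_measurable_continuous) (auto elim: AE_mp)

lemma haar_integral_left_invariant:
  fixes f :: "real^'n^'n \<Rightarrow> real"
  assumes H: "haar_orthogonal \<mu>" and U: "orthogonal_matrix U" and f: "f \<in> borel_measurable borel"
  shows "(\<integral>M. f (U ** M) \<partial>\<mu>) = (\<integral>M. f M \<partial>\<mu>)"
proof -
  have "(\<lambda>M. U ** M) \<in> measurable \<mu> borel"
    using borel_measurable_continuous_onI[OF continuous_matrix_mult_left]
      measurable_cong_sets[OF haar_orthogonalD(2)[OF H] refl] by auto
  then have "integral\<^sup>L (distr \<mu> borel (\<lambda>M. U ** M)) f = (\<integral>M. f (U ** M) \<partial>\<mu>)"
    by (rule integral_distr[OF _ f])
  then show ?thesis using haar_orthogonalD(4)[OF H U] by simp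
qed

text \<open>
  The difference quotients of \<open>f\<close> integrate
  to zero by invariance, converge to \<open>g\<close>, and are bounded by the mean value theorem.
\<close>
lemma haar_generator_integral_zero:
  fixes f g :: "real^'n^'n \<Rightarrow> real"
  assumes H: "haar_orthogonal \<mu>" and pq: "p \<noteq> q"
    and fc: "continuous_on UNIV f" and gc: "continuous_on UNIV g"
    and der0: "\<And>M. ((\<lambda>t. f (givens p q t ** M)) has_real_derivative g M) (at 0)"
  shows "(\<integral>M. g M \<partial>\<mu>) = 0"
proof -
  interpret prob_space \<mu> by (rule haar_orthogonalD(1)[OF H])
  obtain C where C: "\<And>M. orthogonal_matrix M \<Longrightarrow> \<bar>g M\<bar> \<le> C"
    using continuous_bounded_on_orthogonal[OF gc] by blast
  define h :: "nat \<Rightarrow> real" where "h m = inverse (real (Suc m))" for m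
  have h_pos: "h m > 0" for m unfolding h_def by auto
  have f_rot_cont: "continuous_on UNIV (\<lambda>M. f (givens p q t ** M))" for t
    by (rule continuous_on_compose2[OF fc continuous_matrix_mult_left]) auto
  define S where "S m M = (f (givens p q (h m) ** M) - f M) / h m" for m M
  have S_cont: "continuous_on UNIV (S m)" for m
    unfolding S_def using h_pos[of m] by (intro continuous_intros f_rot_cont fc) auto
  have S_int: "(\<integral>M. S m M \<partial>\<mu>) = 0" for m
  proof -
    have "(\<integral>M. S m M \<partial>\<mu>) = ((\<integral>M. f (givens p q (h m) ** M) \<partial>\<mu>) - (\<integral>M. f M \<partial>\<mu>)) / h m"
      unfolding S_def
      by (simp add: Bochner_Integration.integral_diff haar_integrable_continuous[OF H] f_rot_cont fc)
    then show ?thesis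
      using haar_integral_left_invariant[OF H givens_orthogonal[OF pq] borel_measurable_continuous_onI[OF fc]]
      by simp
  qed
  have S_lim: "AE M in \<mu>. (\<lambda>m. S m M) \<longlonglongrightarrow> g M"
  proof (rule AE_I2)
    fix M
    let ?F = "\<lambda>t. f (givens p q t ** M)"
    have "((\<lambda>y. (?F y - ?F 0) / (y - 0)) \<longlongrightarrow> g M) (at 0)"
      using der0[of M] unfolding has_field_derivative_iff by simp
    then have "((\<lambda>y. (?F y - ?F 0) / (y - 0)) \<circ> h) \<longlonglongrightarrow> g M"
      unfolding tendsto_at_iff_sequentially using h_pos LIMSEQ_inverse_real_of_nat
      by (auto simp: h_def[abs_def] less_irrefl)
    then show "(\<lambda>m. S m M) \<longlonglongrightarrow> g M"
      by (simp add: S_def o_def givens_zero)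
  qed
  have S_bound: "AE M in \<mu>. norm (S m M) \<le> C" for m
    using haar_orthogonalD(3)[OF H]
  proof eventually_elim
    case (elim M)
    obtain z where "0 < z" "z < h m"
      "f (givens p q (h m) ** M) - f (givens p q 0 ** M) = (h m - 0) * g (givens p q z ** M)"
      using MVT2[OF h_pos[of m], of "\<lambda>t. f (givens p q t ** M)" "\<lambda>s. g (givens p q s ** M)"]
        givens_flow_deriv[OF pq der0] by blast
    then have "S m M = g (givens p q z ** M)"
      using h_pos[of m] by (simp add: S_def givens_zero)
    then show ?case
      using C[OF orthogonal_matrix_mul[OF givens_orthogonal[OF pq] elim]] by simp
  qed
  have "(\<lambda>m. \<integral>M. S m M \<partial>\<mu>) \<longlonglongrightarrow> (\<integral>M. g M \<partial>\<mu>)"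
    by (rule integral_dominated_convergence[where w="\<lambda>_. C",
          OF haar_measurable_continuous[OF H gc] haar_measurable_continuous[OF H S_cont]
          integrable_const S_lim S_bound])
  then show ?thesis
    using S_int LIMSEQ_unique[OF _ tendsto_const[of 0]] by simp
qed

text \<open>A row reflection is orthogonal, so integrands that are odd under it integrate to zero.\<close>
definition row_reflection :: "'n \<Rightarrow> real^'n^'n" where
  "row_reflection r = (\<chi> a b. if a = b then (if a = r then -1 else 1) else 0)"

lemma row_reflection_mult: "(row_reflection r ** M) $ a $ b = (if a = r then - M$a$b else M$a$b)"
  by (simp add: row_reflection_def matrix_matrix_mult_def if_distrib[of "\<lambda>x. x * _"] cong: if_cong)

lemma row_reflection_orthogonal: "orthogonal_matrix (row_reflection r)"
proof -
  have "transpose (row_reflection r) = row_reflection r"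
    by (auto simp: row_reflection_def transpose_def vec_eq_iff)
  moreover have "row_reflection r ** row_reflection r = mat 1"
    unfolding vec_eq_iff row_reflection_mult by (auto simp: row_reflection_def mat_def)
  ultimately show ?thesis unfolding orthogonal_matrix by simp
qed

lemma haar_integral_odd_zero:
  fixes F :: "real^'n^'n \<Rightarrow> real"
  assumes H: "haar_orthogonal \<mu>" and c: "continuous_on UNIV F"
    and odd: "\<And>N. F (row_reflection r ** N) = - F N"
  shows "(\<integral>N. F N \<partial>\<mu>) = 0"
  using haar_integral_left_invariant[OF H row_reflection_orthogonal[of r]
      borel_measurable_continuous_onI[OF c]]
  by (simp add: odd)


subsection \<open>Recurrences for the mixed moments\<close>

lemma power_pred_mult: "real e * (z::real) ^ (e - 1) * z = real e * z ^ e"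
  by (cases e) auto

lemma same_row_rotation_identity:
  fixes \<mu> :: "(real^'n^'n) measure"
  assumes H: "haar_orthogonal \<mu>" and ri: "r \<noteq> i"
  shows "(\<integral>N. real (a+1) * N$i$j^a * N$r$j * N$r$j * N$i$l^e
              + real e * N$i$j^(a+1) * N$i$l^(e-1) * N$r$l * N$r$j
              - N$i$j^(a+2) * N$i$l^e \<partial>\<mu>) = 0"
proof (rule haar_generator_integral_zero[OF H ri[symmetric]])
  fix M :: "real^'n^'n"
  show "((\<lambda>t. (givens i r t ** M)$i$j^(a+1) * (givens i r t ** M)$i$l^e * (givens i r t ** M)$r$j)
    has_real_derivative real (a+1) * M$i$j^a * M$r$j * M$r$j * M$i$l^e
              + real e * M$i$j^(a+1) * M$i$l^(e-1) * M$r$l * M$r$j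
              - M$i$j^(a+2) * M$i$l^e) (at 0)"
    using ri
    by (auto intro!: derivative_eq_intros givens_entry_deriv simp: givens_zero)
      (cases a; simp add: algebra_simps)
qed (intro continuous_intros)+

text \<open>Summed over all \<open>r \<noteq> i\<close>, the integrand above collapses by orthonormality of the
  columns \<open>j\<close> and \<open>l\<close>.\<close>
lemma same_row_identity_sum:
  fixes N :: "real^'n^'n"
  assumes o: "orthogonal_matrix N" and jl: "j \<noteq> l"
  shows "(\<Sum>r\<in>UNIV - {i}. real (a+1) * N$i$j^a * N$r$j * N$r$j * N$i$l^e
              + real e * N$i$j^(a+1) * N$i$l^(e-1) * N$r$l * N$r$j
              - N$i$j^(a+2) * N$i$l^e)
       = real (a+1) * (N$i$j^a * N$i$l^e)
         - (real a + real e + real CARD('n)) * (N$i$j^(a+2) * N$i$l^e)"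
proof -
  let ?R = "UNIV - {i}"
  have col_j: "(\<Sum>r\<in>?R. N$r$j * N$r$j) = 1 - N$i$j * N$i$j"
    using orthogonal_matrix_column_inner[OF o, of j j] sum.remove[of UNIV i "\<lambda>r. N$r$j * N$r$j"]
    by simp
  have col_lj: "(\<Sum>r\<in>?R. N$r$l * N$r$j) = - N$i$l * N$i$j"
    using orthogonal_matrix_column_inner[OF o, of l j] sum.remove[of UNIV i "\<lambda>r. N$r$l * N$r$j"] jl
    by simp
  have card_R: "real (card ?R) = real CARD('n) - 1"
    by (simp add: card_Diff_singleton of_nat_diff Suc_le_eq)
  have "(\<Sum>r\<in>?R. real (a+1) * N$i$j^a * N$r$j * N$r$j * N$i$l^e
              + real e * N$i$j^(a+1) * N$i$l^(e-1) * N$r$l * N$r$j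
              - N$i$j^(a+2) * N$i$l^e)
      = real (a+1) * N$i$j^a * N$i$l^e * (\<Sum>r\<in>?R. N$r$j * N$r$j)
        + real e * N$i$j^(a+1) * N$i$l^(e-1) * (\<Sum>r\<in>?R. N$r$l * N$r$j)
        - real (card ?R) * (N$i$j^(a+2) * N$i$l^e)"
    by (simp add: sum_subtractf sum.distrib sum_distrib_left mult_ac)
  also have "\<dots> = real (a+1) * N$i$j^a * N$i$l^e * (1 - N$i$j * N$i$j)
        - (real e * N$i$l^(e-1) * N$i$l) * N$i$j^(a+1) * N$i$j
        - (real CARD('n) - 1) * (N$i$j^(a+2) * N$i$l^e)"
    unfolding col_j col_lj card_R by (simp add: algebra_simps)
  also have "\<dots> = real (a+1) * (N$i$j^a * N$i$l^e)
        - (real a + real e + real CARD('n)) * (N$i$j^(a+2) * N$i$l^e)"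
    unfolding power_pred_mult by (simp add: algebra_simps power2_eq_square)
  finally show ?thesis .
qed

lemma same_row_recurrence:
  fixes \<mu> :: "(real^'n^'n) measure"
  assumes H: "haar_orthogonal \<mu>" and jl: "j \<noteq> l"
  shows "(real a + real e + real CARD('n)) * (\<integral>N. N$i$j^(a+2) * N$i$l^e \<partial>\<mu>)
       = real (a+1) * (\<integral>N. N$i$j^a * N$i$l^e \<partial>\<mu>)"
proof -
  define g where "g r N = real (a+1) * N$i$j^a * N$r$j * N$r$j * N$i$l^e
              + real e * N$i$j^(a+1) * N$i$l^(e-1) * N$r$l * N$r$j
              - N$i$j^(a+2) * N$i$l^e" for r and N :: "real^'n^'n"
  have g_cont: "continuous_on UNIV (g r)" for r
    unfolding g_def by (intro continuous_intros)
  have "0 = (\<Sum>r\<in>UNIV - {i}. \<integral>N. g r N \<partial>\<mu>)"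
    using same_row_rotation_identity[OF H] by (simp add: g_def)
  also have "\<dots> = (\<integral>N. (\<Sum>r\<in>UNIV - {i}. g r N) \<partial>\<mu>)"
    by (intro Bochner_Integration.integral_sum[symmetric] haar_integrable_continuous[OF H] g_cont)
  also have "\<dots> = (\<integral>N. real (a+1) * (N$i$j^a * N$i$l^e)
      - (real a + real e + real CARD('n)) * (N$i$j^(a+2) * N$i$l^e) \<partial>\<mu>)"
    unfolding g_def
    by (intro haar_integral_cong_orthogonal[OF H] continuous_intros same_row_identity_sum jl)
  also have "\<dots> = real (a+1) * (\<integral>N. N$i$j^a * N$i$l^e \<partial>\<mu>)
      - (real a + real e + real CARD('n)) * (\<integral>N. N$i$j^(a+2) * N$i$l^e \<partial>\<mu>)"
    by (simp add: haar_integrable_continuous[OF H] continuous_intros)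
  finally show ?thesis by simp
qed

lemma cross_rotation_identity:
  fixes \<mu> :: "(real^'n^'n) measure"
  assumes H: "haar_orthogonal \<mu>" and ri: "r \<noteq> i" and rk: "r \<noteq> k" and ik: "i \<noteq> k"
  shows "(\<integral>N. N$i$j^a * N$i$l^e * (real (b+1) * N$k$l^b * N$r$l * N$r$l - N$k$l^(b+2)) \<partial>\<mu>) = 0"
proof (rule haar_generator_integral_zero[OF H rk[symmetric]])
  fix M :: "real^'n^'n"
  show "((\<lambda>t. (givens k r t ** M)$i$j^a * (givens k r t ** M)$i$l^e
            * (givens k r t ** M)$k$l^(b+1) * (givens k r t ** M)$r$l)
    has_real_derivative M$i$j^a * M$i$l^e * (real (b+1) * M$k$l^b * M$r$l * M$r$l - M$k$l^(b+2))) (at 0)"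
    using ri rk ik
    by (auto intro!: derivative_eq_intros givens_entry_deriv simp: givens_zero)
      (cases b; simp add: algebra_simps)
qed (intro continuous_intros)+

text \<open>Summed over all \<open>r \<notin> {i, k}\<close>, the integrand above collapses by normalization of column \<open>l\<close>.\<close>
lemma cross_identity_sum:
  fixes N :: "real^'n^'n"
  assumes o: "orthogonal_matrix N" and ik: "i \<noteq> k" and n: "CARD('n) \<ge> 2"
  shows "(\<Sum>r\<in>UNIV - {i} - {k}. N$i$j^a * N$i$l^e * (real (b+1) * N$k$l^b * N$r$l * N$r$l - N$k$l^(b+2)))
       = real (b+1) * (N$i$j^a * N$i$l^e * N$k$l^b)
         - real (b+1) * (N$i$j^a * N$i$l^(e+2) * N$k$l^b)
         - (real b + real CARD('n) - 1) * (N$i$j^a * N$i$l^e * N$k$l^(b+2))"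
proof -
  let ?R = "UNIV - {i} - {k}"
  have "(\<Sum>r\<in>UNIV - {i}. N$r$l * N$r$l) = 1 - N$i$l * N$i$l"
    using orthogonal_matrix_column_inner[OF o, of l l] sum.remove[of UNIV i "\<lambda>r. N$r$l * N$r$l"]
    by simp
  then have col_l: "(\<Sum>r\<in>?R. N$r$l * N$r$l) = 1 - N$i$l * N$i$l - N$k$l * N$k$l"
    using sum.remove[of "UNIV - {i}" k "\<lambda>r. N$r$l * N$r$l"] ik by simp
  have card_R: "real (card ?R) = real CARD('n) - 2"
    using n ik by (simp add: card_Diff_singleton of_nat_diff)
  have "(\<Sum>r\<in>?R. N$i$j^a * N$i$l^e * (real (b+1) * N$k$l^b * N$r$l * N$r$l - N$k$l^(b+2)))
      = N$i$j^a * N$i$l^e * (real (b+1) * N$k$l^b * (\<Sum>r\<in>?R. N$r$l * N$r$l)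
          - real (card ?R) * N$k$l^(b+2))"
    by (simp add: sum_subtractf sum_distrib_left algebra_simps)
  also have "\<dots> = N$i$j^a * N$i$l^e * (real (b+1) * N$k$l^b * (1 - N$i$l * N$i$l - N$k$l * N$k$l)
          - (real CARD('n) - 2) * N$k$l^(b+2))"
    unfolding col_l card_R ..
  also have "\<dots> = real (b+1) * (N$i$j^a * N$i$l^e * N$k$l^b)
      - real (b+1) * (N$i$j^a * N$i$l^(e+2) * N$k$l^b)
      - (real b + real CARD('n) - 1) * (N$i$j^a * N$i$l^e * N$k$l^(b+2))"
    by (simp add: algebra_simps power2_eq_square)
  finally show ?thesis .
qed

lemma cross_recurrence:
  fixes \<mu> :: "(real^'n^'n) measure"
  assumes H: "haar_orthogonal \<mu>" and ik: "i \<noteq> k" and n: "CARD('n) \<ge> 2"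
  shows "(real b + real CARD('n) - 1) * (\<integral>N. N$i$j^a * N$i$l^e * N$k$l^(b+2) \<partial>\<mu>)
       = real (b+1) * ((\<integral>N. N$i$j^a * N$i$l^e * N$k$l^b \<partial>\<mu>)
                       - (\<integral>N. N$i$j^a * N$i$l^(e+2) * N$k$l^b \<partial>\<mu>))"
proof -
  define g where "g r N = N$i$j^a * N$i$l^e * (real (b+1) * N$k$l^b * N$r$l * N$r$l - N$k$l^(b+2))"
    for r and N :: "real^'n^'n"
  have g_cont: "continuous_on UNIV (g r)" for r
    unfolding g_def by (intro continuous_intros)
  have "0 = (\<Sum>r\<in>UNIV - {i} - {k}. \<integral>N. g r N \<partial>\<mu>)"
    using cross_rotation_identity[OF H _ _ ik] by (simp add: g_def)
  also have "\<dots> = (\<integral>N. (\<Sum>r\<in>UNIV - {i} - {k}. g r N) \<partial>\<mu>)"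
    by (intro Bochner_Integration.integral_sum[symmetric] haar_integrable_continuous[OF H] g_cont)
  also have "\<dots> = (\<integral>N. real (b+1) * (N$i$j^a * N$i$l^e * N$k$l^b)
      - real (b+1) * (N$i$j^a * N$i$l^(e+2) * N$k$l^b)
      - (real b + real CARD('n) - 1) * (N$i$j^a * N$i$l^e * N$k$l^(b+2)) \<partial>\<mu>)"
    unfolding g_def
    by (intro haar_integral_cong_orthogonal[OF H] continuous_intros cross_identity_sum ik n)
  also have "\<dots> = real (b+1) * (\<integral>N. N$i$j^a * N$i$l^e * N$k$l^b \<partial>\<mu>)
      - real (b+1) * (\<integral>N. N$i$j^a * N$i$l^(e+2) * N$k$l^b \<partial>\<mu>)
      - (real b + real CARD('n) - 1) * (\<integral>N. N$i$j^a * N$i$l^e * N$k$l^(b+2) \<partial>\<mu>)"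
    by (simp add: haar_integrable_continuous[OF H] continuous_intros)
  finally show ?thesis by (simp add: algebra_simps)
qed


subsection \<open>The even moments\<close>

text \<open>Moments of two entries of one row, by induction on both exponents via the first recurrence
  (applied with the columns \<open>j\<close>, \<open>l\<close> in either order).\<close>
lemma row_moment_even:
  fixes \<mu> :: "(real^'n^'n) measure"
  assumes H: "haar_orthogonal \<mu>" and jl: "j \<noteq> l" and n: "CARD('n) = m + 2"
  shows "(\<integral>N. N$i$j^(2*p) * N$i$l^(2*q) \<partial>\<mu>) = moment_formula m (2*p) (2*q) 0"
proof (induction p)
  case 0
  have "(\<integral>N. N$i$l^(2*q) \<partial>\<mu>) = moment_formula m 0 (2*q) 0"
  proof (induction q)
    case 0
    interpret prob_space \<mu> by (rule haar_orthogonalD(1)[OF H])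
    show ?case by (simp add: moment_formula_0 prob_space)
  next
    case (Suc q)
    have "real (2*q + m + 2) * (\<integral>N. N$i$l^(2*q+2) \<partial>\<mu>) = real (2*q+1) * moment_formula m 0 (2*q) 0"
      using same_row_recurrence[OF H jl[symmetric], of "2*q" 0 i] n Suc by (simp add: add_ac)
    also have "\<dots> = real (2*q + m + 2) * moment_formula m 0 (2*q+2) 0"
      using moment_formula_step_e[of 0 "2*q" 0 m] by (simp add: add_ac)
    finally show ?case by simp
  qed
  then show ?case by simp
next
  case (Suc p)
  have "real (2*p + 2*q + m + 2) * (\<integral>N. N$i$j^(2*p+2) * N$i$l^(2*q) \<partial>\<mu>)
      = real (2*p+1) * moment_formula m (2*p) (2*q) 0"
    using same_row_recurrence[OF H jl, of "2*p" "2*q" i] n Suc by (simp add: add_ac)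
  also have "\<dots> = real (2*p + 2*q + m + 2) * moment_formula m (2*p+2) (2*q) 0"
    using moment_formula_step_a[of "2*p" "2*q" m] by (simp add: add_ac)
  finally show ?case by simp
qed

text \<open>All even mixed moments, by induction on the exponent of \<open>y\<close> via the second recurrence,
  generalizing over the exponent of \<open>z\<close>.\<close>
lemma joint_moment_even:
  fixes \<mu> :: "(real^'n^'n) measure"
  assumes H: "haar_orthogonal \<mu>" and jl: "j \<noteq> l" and ik: "i \<noteq> k" and n: "CARD('n) = m + 2"
  shows "(\<integral>N. N$i$j^(2*p) * N$i$l^(2*e) * N$k$l^(2*q) \<partial>\<mu>) = moment_formula m (2*p) (2*e) (2*q)"
proof (induction q arbitrary: e)
  case 0
  then show ?case using row_moment_even[OF H jl n] by simp
next
  case (Suc q)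
  have "real (2*q + m + 1) * (\<integral>N. N$i$j^(2*p) * N$i$l^(2*e) * N$k$l^(2*q+2) \<partial>\<mu>)
      = real (2*q+1) * (moment_formula m (2*p) (2*e) (2*q) - moment_formula m (2*p) (2*e+2) (2*q))"
    using cross_recurrence[OF H ik, of "2*q" j "2*p" l "2*e"] n Suc[of e] Suc[of "e+1"]
    by (simp add: add_ac)
  also have "\<dots> = real (2*q + m + 1) * moment_formula m (2*p) (2*e) (2*q+2)"
    using moment_formula_step_b[where a="2*p" and e="2*e" and b="2*q"] by (simp add: add_ac)
  finally show ?case by simp
qed


theorem corollary4p5:
  fixes \<mu> :: "(real^'n^'n) measure" and i j k l :: 'n and \<alpha> \<beta> :: nat
  assumes "CARD('n) \<ge> 2"
    and "haar_orthogonal \<mu>"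
    and "i \<noteq> k" and "j \<noteq> l"
  shows "(even \<alpha> \<and> even \<beta> \<longrightarrow>
            (\<integral>M. (M $ i $ j) ^ \<alpha> * (M $ k $ l) ^ \<beta> \<partial>\<mu>) =
              fact (CARD('n) - 2) * dfact \<alpha> * dfact \<beta> * dfact (\<alpha> + \<beta> + CARD('n) - 2)
              / (dfact (\<alpha> + CARD('n) - 2) * dfact (\<beta> + CARD('n) - 2)
                 * dfact (\<alpha> + \<beta> + CARD('n) - 1)))
       \<and> (odd \<alpha> \<or> odd \<beta> \<longrightarrow>
            (\<integral>M. (M $ i $ j) ^ \<alpha> * (M $ k $ l) ^ \<beta> \<partial>\<mu>) = 0)"
proof (intro conjI impI)
  obtain m where n: "CARD('n) = m + 2"
    using assms(1) by (metis le_add_diff_inverse2)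
  assume "even \<alpha> \<and> even \<beta>"
  then obtain p q where \<alpha>: "\<alpha> = 2*p" and \<beta>: "\<beta> = 2*q" by (auto elim!: evenE)
  have "(\<integral>M. (M $ i $ j) ^ \<alpha> * (M $ k $ l) ^ \<beta> \<partial>\<mu>) = moment_formula m (2*p) (2*0) (2*q)"
    using joint_moment_even[OF assms(2,4,3) n, of p 0 q] by (simp add: \<alpha> \<beta>)
  then show "(\<integral>M. (M $ i $ j) ^ \<alpha> * (M $ k $ l) ^ \<beta> \<partial>\<mu>) =
              fact (CARD('n) - 2) * dfact \<alpha> * dfact \<beta> * dfact (\<alpha> + \<beta> + CARD('n) - 2)
              / (dfact (\<alpha> + CARD('n) - 2) * dfact (\<beta> + CARD('n) - 2)
                 * dfact (\<alpha> + \<beta> + CARD('n) - 1))"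
    by (simp add: moment_formula_def dfact_0 n \<alpha> \<beta> add_ac mult_ac)
next
  assume "odd \<alpha> \<or> odd \<beta>"
  then obtain r where "\<And>M. (row_reflection r ** M) $ i $ j ^ \<alpha> * (row_reflection r ** M) $ k $ l ^ \<beta>
                           = - ((M $ i $ j) ^ \<alpha> * (M $ k $ l) ^ \<beta>)"
  proof
    assume "odd \<alpha>"
    then show thesis using assms(3) by (intro that[of i]) (simp add: row_reflection_mult)
  next
    assume "odd \<beta>"
    then show thesis using assms(3) by (intro that[of k]) (simp add: row_reflection_mult)
  qed
  then show "(\<integral>M. (M $ i $ j) ^ \<alpha> * (M $ k $ l) ^ \<beta> \<partial>\<mu>) = 0"
    by (intro haar_integral_odd_zero[OF assms(2)] continuous_intros)
qed

end
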